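(* A cyclic graph without a dominated vertex is isomorphic (as a directed graph) to $\overrightarrow{C_n^k}$ for some integers $0\le k<\frac12 n$. Consequently, every cyclic graph dismantles to an induced subgraph of the form $\overrightarrow{C_n^k}$.
   Context: A directed graph is a finite pair $(V,E)$, $E\subseteq V\times V$, with no loops and never both $(v,w),(w,v)\in E$; write $v\to w$. A cyclic graph is a directed graph whose vertices are arranged in a cyclic order $v_0\prec v_1\prec\cdots\prec v_{n-1}$ (indices mod $n$) such that whenever $v_i\to v_j$, either $j=i+1$ or both $v_i\to v_{j-1}$ and $v_{i+1}\to v_j$. For a vertex $v$, $N^-(\overrightarrow G,v)=\{w:w\to v\}$ and $N^-[\overrightarrow G,v]=N^-(\overrightarrow G,v)\cup\{v\}$. A vertex $v_i$ is dominated (by $v_{i+1}$) if $N^-(\overrightarrow G,v_{i+1})=N^-[\overrightarrow G,v_i]$. A cyclic graph $\overrightarrow G$ dismantles to an induced subgraph $\overrightarrow H$ if there is a sequence $\overrightarrow G=\overrightarrow G_0,\dots,\overrightarrow G_s=\overrightarrow H$ where each $\overrightarrow G_i$ is obtained from $\overrightarrow G_{i-1}$ (with the inherited cyclic order) by removing a dominated vertex. For integers $0\le k<n/2$, $\overrightarrow{C_n^k}$ is the directed graph on $\{0,\dots,n-1\}$ with $i\to j$ iff $0<(j-i)\bmod n\le k$. *)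

theory Defs
  imports Main
begin

definition digraph :: "'a set \<Rightarrow> ('a \<times> 'a) set \<Rightarrow> bool" where
  "digraph V E \<longleftrightarrow> finite V \<and> E \<subseteq> V \<times> V \<and> (\<forall>v. (v, v) \<notin> E)
     \<and> (\<forall>v w. (v, w) \<in> E \<longrightarrow> (w, v) \<notin> E)"

definition cyclic_graph :: "'a list \<Rightarrow> ('a \<times> 'a) set \<Rightarrow> bool" where
  "cyclic_graph vs E \<longleftrightarrow> distinct vs \<and> digraph (set vs) E \<and>
     (\<forall>i < length vs. \<forall>j < length vs. (vs ! i, vs ! j) \<in> E \<longrightarrow>
        j = (i + 1) mod length vs \<or>
        ((vs ! i, vs ! ((j + length vs - 1) mod length vs)) \<in> E \<and>
         (vs ! ((i + 1) mod length vs), vs ! j) \<in> E))"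

definition in_nbr :: "('a \<times> 'a) set \<Rightarrow> 'a \<Rightarrow> 'a set" where
  "in_nbr E v = {w. (w, v) \<in> E}"

definition closed_in_nbr :: "('a \<times> 'a) set \<Rightarrow> 'a \<Rightarrow> 'a set" where
  "closed_in_nbr E v = insert v (in_nbr E v)"

definition dominated :: "'a list \<Rightarrow> ('a \<times> 'a) set \<Rightarrow> nat \<Rightarrow> bool" where
  "dominated vs E i \<longleftrightarrow> i < length vs \<and>
     in_nbr E (vs ! ((i + 1) mod length vs)) = closed_in_nbr E (vs ! i)"

definition remove_nth :: "nat \<Rightarrow> 'a list \<Rightarrow> 'a list" where
  "remove_nth i xs = take i xs @ drop (Suc i) xs"

definition dismantle_step :: "('a list \<times> ('a \<times> 'a) set) \<Rightarrow> ('a list \<times> ('a \<times> 'a) set) \<Rightarrow> bool" where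
  "dismantle_step G H \<longleftrightarrow> (\<exists>i. dominated (fst G) (snd G) i \<and>
     fst H = remove_nth i (fst G) \<and>
     snd H = snd G \<inter> (set (fst H) \<times> set (fst H)))"

definition dismantles_to :: "'a list \<Rightarrow> ('a \<times> 'a) set \<Rightarrow> 'a list \<Rightarrow> ('a \<times> 'a) set \<Rightarrow> bool" where
  "dismantles_to vs E ws F \<longleftrightarrow> dismantle_step\<^sup>*\<^sup>* (vs, E) (ws, F)"

definition circ :: "nat \<Rightarrow> nat \<Rightarrow> (nat \<times> nat) set" where
  "circ n k = {(i, j). i < n \<and> j < n \<and> 0 < (j + n - i) mod n \<and> (j + n - i) mod n \<le> k}"

definition digraph_iso :: "'a set \<Rightarrow> ('a \<times> 'a) set \<Rightarrow> 'b set \<Rightarrow> ('b \<times> 'b) set \<Rightarrow> bool" where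
  "digraph_iso V E W F \<longleftrightarrow> (\<exists>f. bij_betw f V W \<and>
     (\<forall>x\<in>V. \<forall>y\<in>V. (x, y) \<in> E \<longleftrightarrow> (f x, f y) \<in> F))"

end

theory Submission
  imports Defs
begin

text \<open>Reformulated with indices, a cyclic graph is one in which every arc \<open>v\<^sub>a \<rightarrow> v\<^sub>c\<close>
spans its cyclic interval: \<open>v\<^sub>a \<rightarrow> v\<^sub>b\<close> and \<open>v\<^sub>b \<rightarrow> v\<^sub>c\<close> for every \<open>b\<close> strictly
between \<open>a\<close> and \<open>c\<close>. This property passes to induced subgraphs, so cyclic graphs are
closed under vertex deletion, and it forces the in-neighbourhood of \<open>v\<^sub>j\<close> to be the block of
its \<open>|N\<^sup>-(v\<^sub>j)|\<close> immediate predecessors. The cyclic condition also gives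
\<open>N\<^sup>-(v\<^sub>j\<^sub>+\<^sub>1) \<subseteq> N\<^sup>-[v\<^sub>j]\<close>, an inclusion that is strict exactly when \<open>v\<^sub>j\<close> is not
dominated. Without dominated vertices the in-degree is therefore non-increasing once around
the cycle, hence constant, say \<open>k\<close>, and the graph is \<open>C\<^sub>n\<^sup>k\<close>; asymmetry of arcs gives
\<open>2k < n\<close>. Removing dominated vertices one at a time then yields the dismantling.\<close>

definition cyc_succ :: "nat \<Rightarrow> nat \<Rightarrow> nat" where
  "cyc_succ n i = (if Suc i = n then 0 else Suc i)"

text \<open>For \<open>j, t < n\<close>, \<open>cyc_back n j t\<close> is the index \<open>t\<close> steps before \<open>j\<close> in \<open>\<int>/n\<close>,
i.e. \<open>(j - t) mod n\<close>; for \<open>i, j < n\<close>, \<open>cyc_back n j i\<close> is the length of an arc \<open>i \<rightarrow> j\<close>.\<close>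
definition cyc_back :: "nat \<Rightarrow> nat \<Rightarrow> nat \<Rightarrow> nat" where
  "cyc_back n j t = (if t \<le> j then j - t else j + n - t)"

definition cyc_between :: "nat \<Rightarrow> nat \<Rightarrow> nat \<Rightarrow> bool" where
  "cyc_between a b c \<longleftrightarrow> (a < b \<and> b < c) \<or> (b < c \<and> c < a) \<or> (c < a \<and> a < b)"

lemma Suc_mod_eq_cyc_succ: "i < n \<Longrightarrow> Suc i mod n = cyc_succ n i"
  by (auto simp: cyc_succ_def)

lemma mod_eq_cyc_back:
  assumes "j < n" "t \<le> n"
  shows "(j + n - t) mod n = cyc_back n j t"
proof (cases "t \<le> j")
  case True
  then have "(j + n - t) mod n = (j - t + n) mod n" by simp
  also have "\<dots> = j - t" using \<open>j < n\<close> by (simp only: mod_add_self2) simp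
  finally show ?thesis using True by (simp add: cyc_back_def)
qed (use assms in \<open>simp add: cyc_back_def\<close>)

lemma cyc_back_cyc_back:
  "i < n \<Longrightarrow> j < n \<Longrightarrow> cyc_back n j (cyc_back n j i) = i"
  by (auto simp: cyc_back_def)

lemma cyclic_graph_iff:
  "cyclic_graph vs E \<longleftrightarrow> distinct vs \<and> digraph (set vs) E \<and>
     (\<forall>i < length vs. \<forall>j < length vs. (vs ! i, vs ! j) \<in> E \<longrightarrow>
        j = cyc_succ (length vs) i \<or>
        ((vs ! i, vs ! cyc_back (length vs) j 1) \<in> E \<and> (vs ! cyc_succ (length vs) i, vs ! j) \<in> E))"
  unfolding cyclic_graph_def
  by (auto simp: Suc_mod_eq_cyc_succ mod_eq_cyc_back[where t = 1, simplified])

definition interval_closed :: "'a list \<Rightarrow> ('a \<times> 'a) set \<Rightarrow> bool" where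
  "interval_closed vs E \<longleftrightarrow> (\<forall>a < length vs. \<forall>b < length vs. \<forall>c < length vs.
     cyc_between a b c \<longrightarrow> (vs ! a, vs ! c) \<in> E \<longrightarrow> (vs ! a, vs ! b) \<in> E \<and> (vs ! b, vs ! c) \<in> E)"

lemma interval_closed_if_cyclic_graph:
  assumes "cyclic_graph vs E"
  shows "interval_closed vs E"
proof -
  define n where "n = length vs"
  have arc: "j = cyc_succ n i \<or> (vs ! i, vs ! cyc_back n j 1) \<in> E \<and> (vs ! cyc_succ n i, vs ! j) \<in> E"
    if "i < n" "j < n" "(vs ! i, vs ! j) \<in> E" for i j
    using assms that unfolding cyclic_graph_iff n_def by blast
  have "(vs ! i, vs ! b) \<in> E \<and> (vs ! b, vs ! j) \<in> E"
    if "i < n" "j < n" "b < n" "cyc_between i b j" "(vs ! i, vs ! j) \<in> E" for i j b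
    using that
  \<comment> \<open>induction on the length of the arc: the cyclic condition supplies the two shorter arcs
      \<open>i \<rightarrow> p\<close> and \<open>s \<rightarrow> j\<close>, which together cover the interval\<close>
  proof (induction "cyc_back n j i" arbitrary: i j b rule: less_induct)
    case less
    define p where "p = cyc_back n j 1"
    define s where "s = cyc_succ n i"
    have "j \<noteq> s" using less.prems by (auto simp: s_def cyc_succ_def cyc_between_def)
    then have ip: "(vs ! i, vs ! p) \<in> E" and sj: "(vs ! s, vs ! j) \<in> E"
      using arc less.prems unfolding p_def s_def by blast+
    have p: "p < n" and s: "s < n"
      using less.prems by (auto simp: p_def s_def cyc_back_def cyc_succ_def)
    have "cyc_back n p i < cyc_back n j i" "cyc_back n j s < cyc_back n j i"
      using less.prems by (auto simp: p_def s_def cyc_back_def cyc_succ_def cyc_between_def)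
    note IH = less.hyps[OF this(1) less.prems(1) p _ _ ip] less.hyps[OF this(2) s less.prems(2) _ _ sj]
    have "(vs ! i, vs ! b) \<in> E"
    proof (cases "b = p")
      case False
      then have "cyc_between i b p"
        using less.prems by (auto simp: p_def cyc_back_def cyc_between_def)
      then show ?thesis using IH(1) less.prems by blast
    qed (use ip in simp)
    moreover have "(vs ! b, vs ! j) \<in> E"
    proof (cases "b = s")
      case False
      then have "cyc_between s b j"
        using less.prems by (auto simp: s_def cyc_succ_def cyc_between_def)
      then show ?thesis using IH(2) less.prems by blast
    qed (use sj in simp)
    ultimately show ?case ..
  qed
  then show ?thesis unfolding interval_closed_def n_def by blast
qed

lemma cyclic_graph_if_interval_closed:
  assumes "distinct vs" "digraph (set vs) E" "interval_closed vs E"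
  shows "cyclic_graph vs E"
  unfolding cyclic_graph_iff
proof (intro conjI assms allI impI)
  fix i j
  let ?n = "length vs"
  assume i: "i < ?n" and j: "j < ?n" and ij: "(vs ! i, vs ! j) \<in> E"
  show "j = cyc_succ ?n i \<or>
      (vs ! i, vs ! cyc_back ?n j 1) \<in> E \<and> (vs ! cyc_succ ?n i, vs ! j) \<in> E"
  proof (cases "j = cyc_succ ?n i")
    case False
    have "i \<noteq> j" using ij assms(2) unfolding digraph_def by auto
    then have "cyc_between i (cyc_back ?n j 1) j" "cyc_between i (cyc_succ ?n i) j"
      and "cyc_back ?n j 1 < ?n" "cyc_succ ?n i < ?n"
      using False i j by (auto simp: cyc_succ_def cyc_back_def cyc_between_def split: if_splits)
    then show ?thesis using assms(3) i j ij unfolding interval_closed_def by blast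
  qed simp
qed

lemma nth_remove_nth:
  "m < length xs \<Longrightarrow> p < length xs - 1 \<Longrightarrow>
     remove_nth m xs ! p = xs ! (if p < m then p else Suc p)"
  by (auto simp: remove_nth_def nth_append)

lemma length_remove_nth: "m < length xs \<Longrightarrow> length (remove_nth m xs) = length xs - 1"
  by (simp add: remove_nth_def)

lemma distinct_remove_nth: "distinct xs \<Longrightarrow> distinct (remove_nth m xs)"
  unfolding remove_nth_def by (simp add: set_take_disj_set_drop_if_distinct)

lemma interval_closed_remove_nth:
  assumes m: "m < length vs" and "interval_closed vs E"
  shows "interval_closed (remove_nth m vs) (E \<inter> (set (remove_nth m vs) \<times> set (remove_nth m vs)))"
  unfolding interval_closed_def
proof (intro allI impI)
  let ?ws = "remove_nth m vs"
  define up where "up p = (if p < m then p else Suc p)" for p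
  fix a b c
  assume abc: "a < length ?ws" "b < length ?ws" "c < length ?ws" "cyc_between a b c"
    and ac: "(?ws ! a, ?ws ! c) \<in> E \<inter> (set ?ws \<times> set ?ws)"
  have nth: "?ws ! p = vs ! up p" if "p < length ?ws" for p
    using that m by (simp add: nth_remove_nth up_def length_remove_nth)
  have "up a < length vs" "up b < length vs" "up c < length vs" "cyc_between (up a) (up b) (up c)"
    using abc m by (auto simp: up_def cyc_between_def length_remove_nth)
  then have "(vs ! up a, vs ! up b) \<in> E \<and> (vs ! up b, vs ! up c) \<in> E"
    using assms(2) ac nth abc unfolding interval_closed_def by auto
  moreover have "?ws ! a \<in> set ?ws" "?ws ! b \<in> set ?ws" "?ws ! c \<in> set ?ws"
    using abc by auto
  ultimately show "(?ws ! a, ?ws ! b) \<in> E \<inter> (set ?ws \<times> set ?ws) \<and> (?ws ! b, ?ws ! c) \<in> E \<inter> (set ?ws \<times> set ?ws)"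
    using abc nth by simp
qed

lemma cyclic_graph_remove_nth:
  assumes "cyclic_graph vs E" "m < length vs"
  shows "cyclic_graph (remove_nth m vs) (E \<inter> (set (remove_nth m vs) \<times> set (remove_nth m vs)))"
proof (rule cyclic_graph_if_interval_closed)
  show "distinct (remove_nth m vs)"
    using assms(1) distinct_remove_nth unfolding cyclic_graph_def by blast
  show "digraph (set (remove_nth m vs)) (E \<inter> (set (remove_nth m vs) \<times> set (remove_nth m vs)))"
    using assms(1) unfolding cyclic_graph_def digraph_def by auto
  show "interval_closed (remove_nth m vs) (E \<inter> (set (remove_nth m vs) \<times> set (remove_nth m vs)))"
    using interval_closed_remove_nth assms interval_closed_if_cyclic_graph by blast
qed

lemma in_nbr_cyc_succ_subset:
  assumes cg: "cyclic_graph vs E" and j: "j < length vs"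
  shows "in_nbr E (vs ! cyc_succ (length vs) j) \<subseteq> closed_in_nbr E (vs ! j)"
proof
  let ?n = "length vs"
  fix w assume "w \<in> in_nbr E (vs ! cyc_succ ?n j)"
  then have arc: "(w, vs ! cyc_succ ?n j) \<in> E" by (simp add: in_nbr_def)
  moreover have "E \<subseteq> set vs \<times> set vs" using cg unfolding cyclic_graph_def digraph_def by blast
  ultimately have "w \<in> set vs" by blast
  then obtain i where i: "i < ?n" "w = vs ! i" by (auto simp: in_set_conv_nth)
  show "w \<in> closed_in_nbr E (vs ! j)"
  proof (cases "i = j")
    case False
    then have "cyc_succ ?n j \<noteq> cyc_succ ?n i" "cyc_succ ?n j < ?n"
      using i j by (auto simp: cyc_succ_def split: if_splits)
    then have "(vs ! i, vs ! cyc_back ?n (cyc_succ ?n j) 1) \<in> E"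
      using cg arc i unfolding cyclic_graph_iff by blast
    moreover have "cyc_back ?n (cyc_succ ?n j) 1 = j"
      using j by (auto simp: cyc_succ_def cyc_back_def)
    ultimately show ?thesis using i by (simp add: closed_in_nbr_def in_nbr_def)
  qed (simp add: i closed_in_nbr_def)
qed

lemma finite_in_nbr: "digraph V E \<Longrightarrow> finite (in_nbr E v)"
  unfolding digraph_def in_nbr_def
  by (rule finite_subset[of _ V]) auto

lemma card_closed_in_nbr: "digraph V E \<Longrightarrow> card (closed_in_nbr E v) = Suc (card (in_nbr E v))"
  using finite_in_nbr[of V E v] unfolding digraph_def closed_in_nbr_def in_nbr_def by simp

lemma card_in_nbr_cyc_succ_le:
  assumes cg: "cyclic_graph vs E" and j: "j < length vs" and "\<not> dominated vs E j"
  shows "card (in_nbr E (vs ! cyc_succ (length vs) j)) \<le> card (in_nbr E (vs ! j))"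
proof -
  have dg: "digraph (set vs) E" using cg unfolding cyclic_graph_def by blast
  have "in_nbr E (vs ! cyc_succ (length vs) j) \<noteq> closed_in_nbr E (vs ! j)"
    using assms unfolding dominated_def by (simp add: Suc_mod_eq_cyc_succ)
  then have "in_nbr E (vs ! cyc_succ (length vs) j) \<subset> closed_in_nbr E (vs ! j)"
    using in_nbr_cyc_succ_subset[OF cg j] by blast
  then have "card (in_nbr E (vs ! cyc_succ (length vs) j)) < card (closed_in_nbr E (vs ! j))"
    using dg by (intro psubset_card_mono) (simp_all add: finite_in_nbr closed_in_nbr_def)
  then show ?thesis using card_closed_in_nbr[OF dg] by simp
qed

lemma cyclically_antitone_imp_constant:
  fixes f :: "nat \<Rightarrow> 'b::linorder"
  assumes anti: "\<And>i. i < n \<Longrightarrow> f (cyc_succ n i) \<le> f i" and j: "j < n"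
  shows "f j = f 0"
proof -
  have mono: "f j' \<le> f j" if "j \<le> j'" "j' < n" for j j'
    using that
  proof (induction j' rule: dec_induct)
    case (step m)
    then have "f (Suc m) \<le> f m" using anti[of m] by (simp add: cyc_succ_def)
    with step show ?case by simp
  qed simp
  have "f j \<le> f 0" using mono[of 0 j] j by simp
  moreover have "f 0 \<le> f (n - 1)" using anti[of "n - 1"] j by (simp add: cyc_succ_def)
  moreover have "f (n - 1) \<le> f j" using mono[of j "n - 1"] j by simp
  ultimately show ?thesis by simp
qed

lemma down_closed_eq_atLeastAtMost_card:
  fixes S :: "nat set"
  assumes "finite S" "0 \<notin> S" and down: "\<And>t t'. t \<in> S \<Longrightarrow> 0 < t' \<Longrightarrow> t' \<le> t \<Longrightarrow> t' \<in> S"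
  shows "S = {1..card S}"
proof (cases "S = {}")
  case False
  have "S \<subseteq> {1..Max S}"
    using assms by (auto simp: Suc_le_eq) (metis gr0I)
  moreover have "{1..Max S} \<subseteq> S"
    using False assms by (auto intro: down[OF Max_in])
  ultimately have "S = {1..Max S}" by blast
  then show ?thesis by (metis card_atLeastAtMost diff_Suc_1)
qed simp

definition in_arc_lengths :: "'a list \<Rightarrow> ('a \<times> 'a) set \<Rightarrow> nat \<Rightarrow> nat set" where
  "in_arc_lengths vs E j =
     {t. 0 < t \<and> t < length vs \<and> (vs ! cyc_back (length vs) j t, vs ! j) \<in> E}"

lemma in_arc_lengths_down_closed:
  assumes "interval_closed vs E" "j < length vs" "t \<in> in_arc_lengths vs E j" "0 < t'" "t' \<le> t"
  shows "t' \<in> in_arc_lengths vs E j"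
proof (cases "t' = t")
  case False
  let ?n = "length vs"
  have "cyc_between (cyc_back ?n j t) (cyc_back ?n j t') j"
    and "cyc_back ?n j t < ?n" "cyc_back ?n j t' < ?n"
    using assms False by (auto simp: in_arc_lengths_def cyc_back_def cyc_between_def)
  then show ?thesis using assms unfolding interval_closed_def in_arc_lengths_def by auto
qed (use assms in simp)

lemma in_nbr_eq_image_in_arc_lengths:
  assumes dg: "digraph (set vs) E" and j: "j < length vs"
  shows "in_nbr E (vs ! j) = (\<lambda>t. vs ! cyc_back (length vs) j t) ` in_arc_lengths vs E j"
proof
  let ?n = "length vs"
  show "in_nbr E (vs ! j) \<subseteq> (\<lambda>t. vs ! cyc_back ?n j t) ` in_arc_lengths vs E j"
  proof
    fix w assume "w \<in> in_nbr E (vs ! j)"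
    then have arc: "(w, vs ! j) \<in> E" and "w \<in> set vs"
      using dg unfolding digraph_def in_nbr_def by blast+
    then obtain i where i: "i < ?n" "w = vs ! i" by (auto simp: in_set_conv_nth)
    then have "i \<noteq> j" using arc dg unfolding digraph_def by blast
    then have "cyc_back ?n j i \<in> in_arc_lengths vs E j"
      using i j arc by (auto simp: in_arc_lengths_def cyc_back_cyc_back) (auto simp: cyc_back_def)
    then show "w \<in> (\<lambda>t. vs ! cyc_back ?n j t) ` in_arc_lengths vs E j"
      using i j by (metis cyc_back_cyc_back image_eqI)
  qed
qed (auto simp: in_arc_lengths_def in_nbr_def)

lemma card_in_arc_lengths:
  assumes dist: "distinct vs" and dg: "digraph (set vs) E" and j: "j < length vs"
  shows "card (in_arc_lengths vs E j) = card (in_nbr E (vs ! j))"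
proof -
  let ?n = "length vs"
  have "inj_on (\<lambda>t. vs ! cyc_back ?n j t) (in_arc_lengths vs E j)"
  proof
    fix t t' assume tt': "t \<in> in_arc_lengths vs E j" "t' \<in> in_arc_lengths vs E j"
      and "vs ! cyc_back ?n j t = vs ! cyc_back ?n j t'"
    moreover have "cyc_back ?n j t < ?n" "cyc_back ?n j t' < ?n"
      using tt' j by (auto simp: in_arc_lengths_def cyc_back_def)
    ultimately have "cyc_back ?n j t = cyc_back ?n j t'" using dist nth_eq_iff_index_eq by blast
    moreover have "t < ?n" "t' < ?n" using tt' by (simp_all add: in_arc_lengths_def)
    ultimately show "t = t'" using j by (metis cyc_back_cyc_back)
  qed
  then show ?thesis by (simp add: in_nbr_eq_image_in_arc_lengths[OF dg j] card_image)
qed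

lemma arc_iff_in_circ:
  assumes ic: "interval_closed vs E" and dist: "distinct vs" and dg: "digraph (set vs) E"
    and i: "i < length vs" and j: "j < length vs"
  shows "(vs ! i, vs ! j) \<in> E \<longleftrightarrow> (i, j) \<in> circ (length vs) (card (in_nbr E (vs ! j)))"
proof (cases "i = j")
  case True
  then show ?thesis using dg by (simp add: digraph_def circ_def)
next
  case False
  let ?n = "length vs" and ?t = "cyc_back (length vs) j i"
  have "in_arc_lengths vs E j = {1..card (in_arc_lengths vs E j)}"
    using in_arc_lengths_down_closed[OF ic j]
    by (intro down_closed_eq_atLeastAtMost_card) (auto simp: in_arc_lengths_def)
  then have lengths: "in_arc_lengths vs E j = {1..card (in_nbr E (vs ! j))}"
    by (simp add: card_in_arc_lengths[OF dist dg j])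
  have t: "0 < ?t" "?t < ?n" "cyc_back ?n j ?t = i"
    using False i j by (auto simp: cyc_back_def)
  have "(vs ! i, vs ! j) \<in> E \<longleftrightarrow> ?t \<in> in_arc_lengths vs E j"
    using t by (simp add: in_arc_lengths_def)
  also have "\<dots> \<longleftrightarrow> (i, j) \<in> circ ?n (card (in_nbr E (vs ! j)))"
    using t i j by (simp add: lengths circ_def mod_eq_cyc_back)
  finally show ?thesis .
qed

lemma digraph_iso_circI:
  assumes dist: "distinct vs"
    and arcs: "\<And>i j. i < length vs \<Longrightarrow> j < length vs \<Longrightarrow>
      (vs ! i, vs ! j) \<in> E \<longleftrightarrow> (i, j) \<in> circ (length vs) k"
  shows "digraph_iso (set vs) E {0..<length vs} (circ (length vs) k)"
proof -
  have bij: "bij_betw ((!) vs) {0..<length vs} (set vs)"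
    by (rule bij_betw_nth) (simp_all add: dist atLeast0LessThan)
  define f where "f = the_inv_into {0..<length vs} ((!) vs)"
  have bf: "bij_betw f (set vs) {0..<length vs}"
    unfolding f_def by (rule bij_betw_the_inv_into[OF bij])
  have "vs ! f x = x" if "x \<in> set vs" for x
    unfolding f_def using that by (rule f_the_inv_into_f_bij_betw[OF bij])
  moreover have "f x < length vs" if "x \<in> set vs" for x
    using bf that bij_betwE by fastforce
  ultimately have "(x, y) \<in> E \<longleftrightarrow> (f x, f y) \<in> circ (length vs) k"
    if "x \<in> set vs" "y \<in> set vs" for x y
    using arcs that by metis
  with bf show ?thesis unfolding digraph_iso_def by blast
qed

lemma card_in_nbr_less_length:
  assumes "digraph (set vs) E" "v \<in> set vs"
  shows "card (in_nbr E v) < length vs"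
proof -
  have "in_nbr E v \<subseteq> set vs - {v}"
    using assms(1) unfolding digraph_def in_nbr_def by auto
  then have "card (in_nbr E v) \<le> card (set vs - {v})" by (simp add: card_mono)
  also have "\<dots> < card (set vs)" using card_Diff1_less[OF finite_set assms(2)] .
  also have "\<dots> \<le> length vs" by (rule card_length)
  finally show ?thesis .
qed

lemma iso_circ_if_no_dominated:
  assumes cg: "cyclic_graph vs E" and ne: "vs \<noteq> []" and nd: "\<forall>i. \<not> dominated vs E i"
  shows "\<exists>n k. 2 * k < n \<and> digraph_iso (set vs) E {0..<n} (circ n k)"
proof -
  let ?n = "length vs"
  define k where "k = card (in_nbr E (vs ! 0))"
  have dist: "distinct vs" and dg: "digraph (set vs) E"
    using cg unfolding cyclic_graph_def by blast+
  have "card (in_nbr E (vs ! j)) = k" if "j < ?n" for j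
    using cyclically_antitone_imp_constant[where f = "\<lambda>j. card (in_nbr E (vs ! j))"]
      card_in_nbr_cyc_succ_le[OF cg] nd that unfolding k_def by blast
  then have arcs: "(vs ! i, vs ! j) \<in> E \<longleftrightarrow> (i, j) \<in> circ ?n k" if "i < ?n" "j < ?n" for i j
    using arc_iff_in_circ[OF interval_closed_if_cyclic_graph[OF cg] dist dg] that by simp
  have "2 * k < ?n"
  proof (rule ccontr)
    assume "\<not> 2 * k < ?n"
    moreover have "k < ?n" using card_in_nbr_less_length[OF dg] ne unfolding k_def by simp
    ultimately have "(0, k) \<in> circ ?n k" "(k, 0) \<in> circ ?n k"
      by (auto simp: circ_def)
    then show False using arcs[of 0 k] arcs[of k 0] \<open>k < ?n\<close> ne dg unfolding digraph_def by auto
  qed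
  with digraph_iso_circI[OF dist arcs] show ?thesis by blast
qed

lemma dismantles_to_circ:
  assumes "cyclic_graph vs E" "vs \<noteq> []"
  shows "\<exists>ws F n k. dismantles_to vs E ws F \<and> 2 * k < n \<and> digraph_iso (set ws) F {0..<n} (circ n k)"
  using assms
proof (induction "length vs" arbitrary: vs E rule: less_induct)
  case less
  show ?case
  proof (cases "\<exists>i. dominated vs E i")
    case False
    then obtain n k where "2 * k < n" "digraph_iso (set vs) E {0..<n} (circ n k)"
      using iso_circ_if_no_dominated[OF less.prems] by blast
    then show ?thesis unfolding dismantles_to_def by blast
  next
    case True
    then obtain i where dom: "dominated vs E i" by blast
    define ws where "ws = remove_nth i vs"
    define F where "F = E \<inter> (set ws \<times> set ws)"
    have i: "i < length vs" using dom unfolding dominated_def by blast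
    have "length vs \<noteq> 1"
    proof
      assume "length vs = 1"
      with dom have "in_nbr E (vs ! 0) = closed_in_nbr E (vs ! 0)"
        unfolding dominated_def by simp
      then have "vs ! 0 \<in> in_nbr E (vs ! 0)"
        unfolding closed_in_nbr_def by blast
      moreover have "(vs ! 0, vs ! 0) \<notin> E"
        using less.prems(1) by (simp add: cyclic_graph_def digraph_def)
      ultimately show False by (simp add: in_nbr_def)
    qed
    moreover have "length ws = length vs - 1"
      using i by (simp add: ws_def length_remove_nth)
    ultimately have shorter: "length ws < length vs" and "ws \<noteq> []"
      using i by auto
    moreover have "cyclic_graph ws F"
      unfolding ws_def F_def using cyclic_graph_remove_nth[OF less.prems(1) i] .
    ultimately obtain ws' F' n k where
      "dismantles_to ws F ws' F'" "2 * k < n" "digraph_iso (set ws') F' {0..<n} (circ n k)"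
      using less.hyps[OF shorter] by blast
    moreover have "dismantle_step (vs, E) (ws, F)"
      unfolding dismantle_step_def by (intro exI[of _ i]) (simp add: dom ws_def F_def)
    ultimately show ?thesis
      unfolding dismantles_to_def by (meson converse_rtranclp_into_rtranclp)
  qed
qed

theorem proposition3p12:
  fixes vs :: "'a list" and E :: "('a \<times> 'a) set"
  assumes "cyclic_graph vs E" and "vs \<noteq> []"
  shows "((\<forall>i. \<not> dominated vs E i) \<longrightarrow>
            (\<exists>n k. 2 * k < n \<and> digraph_iso (set vs) E {0..<n} (circ n k)))
       \<and> (\<exists>ws F n k. dismantles_to vs E ws F \<and> 2 * k < n \<and>
            digraph_iso (set ws) F {0..<n} (circ n k))"
  using iso_circ_if_no_dominated[OF assms] dismantles_to_circ[OF assms] by blast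

end
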